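(* The category of finite dimensional rational $\mathbb G_a$-modules over $k$ is wild.
   Context: $k$ is an algebraically closed field of characteristic $p>0$, $\mathbb G_a$ is the additive group over $k$, and a rational $\mathbb G_a$-module is a comodule for $k[\mathbb G_a]=k[T]$. *)

theory Defs
  imports "Jordan_Normal_Form.Matrix" "HOL-Computational_Algebra.Polynomial"
begin

definition family_dim :: "nat \<Rightarrow> ('i \<Rightarrow> 'a::field mat) \<Rightarrow> bool" where
  "family_dim m M \<longleftrightarrow> (\<forall>i. M i \<in> carrier_mat m m)"

definition family_hom :: "nat \<Rightarrow> ('i \<Rightarrow> 'a::field mat) \<Rightarrow> nat \<Rightarrow> ('i \<Rightarrow> 'a mat) \<Rightarrow> 'a mat \<Rightarrow> bool" where
  "family_hom m M m' M' f \<longleftrightarrow> f \<in> carrier_mat m' m \<and> (\<forall>i. f * M i = M' i * f)"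

definition family_iso :: "nat \<Rightarrow> ('i \<Rightarrow> 'a::field mat) \<Rightarrow> nat \<Rightarrow> ('i \<Rightarrow> 'a mat) \<Rightarrow> bool" where
  "family_iso m M m' M' \<longleftrightarrow> (\<exists>f g. family_hom m M m' M' f \<and> family_hom m' M' m M g
      \<and> g * f = 1\<^sub>m m \<and> f * g = 1\<^sub>m m')"

definition family_indec :: "nat \<Rightarrow> ('i \<Rightarrow> 'a::field mat) \<Rightarrow> bool" where
  "family_indec m M \<longleftrightarrow> m > 0 \<and> (\<forall>e. family_hom m M m M e \<and> e * e = e
      \<longrightarrow> e = 0\<^sub>m m m \<or> e = 1\<^sub>m m)"

(* Rational G_a-module structure on k^m, i.e. a k[T]-comodule structure
   Delta(v) = sum_i C_i v (x) T^i  (finitely many nonzero C_i).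
   Coassociativity with Delta(T^n) = sum_j binom(n,j) T^j (x) T^(n-j) is
   C_j * C_l = binom(j+l, j) C_(j+l); counitality (eps(T^i) = delta_(i,0)) is C_0 = 1. *)
definition rational_Ga_module :: "nat \<Rightarrow> (nat \<Rightarrow> 'a::field mat) \<Rightarrow> bool" where
  "rational_Ga_module m C \<longleftrightarrow> family_dim m C
     \<and> (\<exists>d. \<forall>i>d. C i = 0\<^sub>m m m)
     \<and> C 0 = 1\<^sub>m m
     \<and> (\<forall>j l. C j * C l = of_nat ((j + l) choose j) \<cdot>\<^sub>m C (j + l))"

(* Noncommutative polynomials in k<x,y>: finitely supported coefficient functions on
   words over {x,y} (False = x, True = y). *)
definition ncpoly :: "(bool list \<Rightarrow> 'a::field) \<Rightarrow> bool" where
  "ncpoly c \<longleftrightarrow> finite {w. c w \<noteq> 0}"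

fun word_eval :: "nat \<Rightarrow> 'a::field mat \<Rightarrow> 'a mat \<Rightarrow> bool list \<Rightarrow> 'a mat" where
  "word_eval n A B [] = 1\<^sub>m n"
| "word_eval n A B (b # w) = (if b then B else A) * word_eval n A B w"

definition ncpoly_eval :: "nat \<Rightarrow> (bool list \<Rightarrow> 'a::field) \<Rightarrow> 'a mat \<Rightarrow> 'a mat \<Rightarrow> 'a mat" where
  "ncpoly_eval n c A B = mat n n (\<lambda>(i, j). \<Sum>w\<in>{w. c w \<noteq> 0}. c w * word_eval n A B w $$ (i, j))"

(* The pair (A,B) as a k<x,y>-module of dimension n *)
definition pair_family :: "'a mat \<Rightarrow> 'a mat \<Rightarrow> bool \<Rightarrow> 'a mat" where
  "pair_family A B = (\<lambda>b. if b then B else A)"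

(* The functor  M (x)_{k<x,y>} -  given by a k[T]-comodule / k<x,y>-bimodule M that is
   free of rank r over k<x,y>: the coaction on the basis of M is encoded by the
   r x r matrices P i of noncommutative polynomials (coefficient of T^i). *)
definition bimod_functor ::
  "nat \<Rightarrow> (nat \<Rightarrow> nat \<Rightarrow> nat \<Rightarrow> bool list \<Rightarrow> 'a::field) \<Rightarrow> nat \<Rightarrow> 'a mat \<Rightarrow> 'a mat \<Rightarrow> nat \<Rightarrow> 'a mat" where
  "bimod_functor r P n A B i = mat (r * n) (r * n)
     (\<lambda>(p, q). ncpoly_eval n (P i (p div n) (q div n)) A B $$ (p mod n, q mod n))"

(* Wildness (Drozd): there is a representation embedding of the finite dimensional
   k<x,y>-modules into finite dimensional rational G_a-modules, given by tensoring
   with a bimodule free of finite rank over k<x,y>, which preserves indecomposability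
   and reflects isomorphism classes. *)
definition Ga_modules_wild :: "'a::field itself \<Rightarrow> bool" where
  "Ga_modules_wild _ \<longleftrightarrow> (\<exists>(r::nat) (P :: nat \<Rightarrow> nat \<Rightarrow> nat \<Rightarrow> bool list \<Rightarrow> 'a).
      r > 0
    \<and> (\<forall>i a b. ncpoly (P i a b))
    \<and> (\<exists>d. \<forall>i>d. \<forall>a b. P i a b = (\<lambda>_. 0))
    \<and> (\<forall>n A B. A \<in> carrier_mat n n \<and> B \<in> carrier_mat n n \<longrightarrow>
          rational_Ga_module (r * n) (bimod_functor r P n A B))
    \<and> (\<forall>n A B. A \<in> carrier_mat n n \<and> B \<in> carrier_mat n n \<longrightarrow>
          family_indec n (pair_family A B) \<longrightarrow>
          family_indec (r * n) (bimod_functor r P n A B))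
    \<and> (\<forall>n A B n' A' B'. A \<in> carrier_mat n n \<and> B \<in> carrier_mat n n \<and>
          A' \<in> carrier_mat n' n' \<and> B' \<in> carrier_mat n' n' \<longrightarrow>
          family_iso (r * n) (bimod_functor r P n A B) (r * n') (bimod_functor r P n' A' B') \<longrightarrow>
          family_iso n (pair_family A B) n' (pair_family A' B')))"

definition alg_closed :: "'a::field itself \<Rightarrow> bool" where
  "alg_closed _ \<longleftrightarrow> (\<forall>p :: 'a poly. degree p \<ge> 1 \<longrightarrow> (\<exists>x. poly p x = 0))"

end

theory Submission
  imports Defs "HOL-Computational_Algebra.Primes"
begin

(* Let p = char k and N(X) = [[0,0],[X,0]]. A pair (A,B) of n x n matrices is sent to the
   comodule on k^n \<oplus> k^n with coaction matrices C 0 = 1, C 1 = N(1), C p = N(A),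
   C (p^2) = N(B) and C i = 0 otherwise. All products N(X) N(Y) vanish, so coassociativity
   only asks for (j + l choose j) = 0 in k when j, l > 0 and j + l \<in> {p, p^2}, which holds
   in characteristic p. A morphism commuting with N(1) has the block shape [[f,0],[g,f]],
   and commuting with N(A), N(B) says exactly that f is a morphism of pairs; hence
   idempotents and isomorphisms of the comodules come from those of the pairs. *)

lemma prime_dvd_choose_prime_power:
  fixes p k j :: nat
  assumes "prime p" and "0 < j" and "j < p ^ k"
  shows "p dvd (p ^ k choose j)"
proof (rule ccontr)
  assume "\<not> p dvd (p ^ k choose j)"
  then have "coprime (p ^ k) (p ^ k choose j)"
    using \<open>prime p\<close> by (simp add: prime_imp_coprime)
  moreover have "p ^ k dvd j * (p ^ k choose j)"
    using times_binomial_minus1_eq[OF \<open>0 < j\<close>] by simp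
  ultimately have "p ^ k dvd j"
    by (metis coprime_dvd_mult_left_iff)
  then show False
    using assms(2,3) by (simp add: dvd_imp_le leD)
qed

lemma of_nat_choose_CHAR_power_eq_0:
  assumes "prime CHAR('a::semiring_1)" and "0 < j" and "j < CHAR('a) ^ k"
  shows "of_nat (CHAR('a) ^ k choose j) = (0::'a)"
  using prime_dvd_choose_prime_power[OF assms] of_nat_eq_0_iff_char_dvd by blast

subsection \<open>Block matrices\<close>

lemma four_block_mat_eq_iff:
  assumes "A1 \<in> carrier_mat nr1 nc1" "A2 \<in> carrier_mat nr1 nc1"
    "B1 \<in> carrier_mat nr1 nc2" "B2 \<in> carrier_mat nr1 nc2"
    "C1 \<in> carrier_mat nr2 nc1" "C2 \<in> carrier_mat nr2 nc1"
    "D1 \<in> carrier_mat nr2 nc2" "D2 \<in> carrier_mat nr2 nc2"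
  shows "four_block_mat A1 B1 C1 D1 = four_block_mat A2 B2 C2 D2
    \<longleftrightarrow> A1 = A2 \<and> B1 = B2 \<and> C1 = C2 \<and> D1 = D2"
proof
  assume eq: "four_block_mat A1 B1 C1 D1 = four_block_mat A2 B2 C2 D2"
  have entry: "four_block_mat A1 B1 C1 D1 $$ (i, j) = four_block_mat A2 B2 C2 D2 $$ (i, j)" for i j
    using eq by simp
  show "A1 = A2 \<and> B1 = B2 \<and> C1 = C2 \<and> D1 = D2"
  proof (intro conjI eq_matI)
    fix i j
    show "i < dim_row A2 \<Longrightarrow> j < dim_col A2 \<Longrightarrow> A1 $$ (i, j) = A2 $$ (i, j)"
      using entry[of i j] assms by auto
    show "i < dim_row B2 \<Longrightarrow> j < dim_col B2 \<Longrightarrow> B1 $$ (i, j) = B2 $$ (i, j)"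
      using entry[of i "j + nc1"] assms by auto
    show "i < dim_row C2 \<Longrightarrow> j < dim_col C2 \<Longrightarrow> C1 $$ (i, j) = C2 $$ (i, j)"
      using entry[of "i + nr1" j] assms by auto
    show "i < dim_row D2 \<Longrightarrow> j < dim_col D2 \<Longrightarrow> D1 $$ (i, j) = D2 $$ (i, j)"
      using entry[of "i + nr1" "j + nc1"] assms by auto
  qed (use assms in auto)
qed auto

lemma mat_add_self_eq_self:
  fixes e :: "'a::ab_group_add mat"
  assumes "e \<in> carrier_mat nr nc" "e + e = e"
  shows "e = 0\<^sub>m nr nc"
proof (rule eq_matI)
  fix i j
  assume "i < dim_row (0\<^sub>m nr nc :: 'a mat)" "j < dim_col (0\<^sub>m nr nc :: 'a mat)"
  then have "e $$ (i, j) + e $$ (i, j) = e $$ (i, j)"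
    using assms by (metis carrier_matD index_add_mat(1) index_zero_mat(2,3))
  then show "e $$ (i, j) = 0\<^sub>m nr nc $$ (i, j)"
    using \<open>i < _\<close> \<open>j < _\<close> by simp
qed (use assms in auto)

lemma mult_lower_block_mat:
  assumes "g1 \<in> carrier_mat n n'" "g3 \<in> carrier_mat n n'"
    and "f1 \<in> carrier_mat n' n''" "f3 \<in> carrier_mat n' n''"
  shows "four_block_mat g1 (0\<^sub>m n n') g3 g1 * four_block_mat f1 (0\<^sub>m n' n'') f3 f1
    = four_block_mat (g1 * f1) (0\<^sub>m n n'') (g3 * f1 + g1 * f3) (g1 * f1)"
  using assms by (subst mult_four_block_mat[of _ n n' _ n' _ n _ _ n'' _ n'']) simp_all

lemma lower_block_mat_eq_one_iff:
  assumes "f1 \<in> carrier_mat n n" "f3 \<in> carrier_mat n n"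
  shows "four_block_mat f1 (0\<^sub>m n n) f3 f1 = 1\<^sub>m (n + n) \<longleftrightarrow> f1 = 1\<^sub>m n \<and> f3 = 0\<^sub>m n n"
  using four_block_mat_eq_iff[of f1 n n "1\<^sub>m n" "0\<^sub>m n n" n "0\<^sub>m n n" f3 n "0\<^sub>m n n" f1 "1\<^sub>m n"]
    assms four_block_one_mat[of n n] by auto

subsection \<open>Square-zero extensions of a coaction\<close>

definition sqzero_coaction :: "nat \<Rightarrow> (nat \<Rightarrow> 'a::field mat) \<Rightarrow> nat \<Rightarrow> 'a mat" where
  "sqzero_coaction n E i =
    (if i = 0 then 1\<^sub>m (n + n) else four_block_mat (0\<^sub>m n n) (0\<^sub>m n n) (E i) (0\<^sub>m n n))"

lemma sqzero_coaction_carrier: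
  "E i \<in> carrier_mat n n \<Longrightarrow> sqzero_coaction n E i \<in> carrier_mat (n + n) (n + n)"
  by (simp add: sqzero_coaction_def)

lemma sqzero_coaction_mult:
  assumes "0 < j" "0 < l" "E j \<in> carrier_mat n n" "E l \<in> carrier_mat n n"
  shows "sqzero_coaction n E j * sqzero_coaction n E l = 0\<^sub>m (n + n) (n + n)"
  using assms
  by (simp add: sqzero_coaction_def mult_four_block_mat[of _ n n _ n _ n _ _ n _ n]
      flip: four_block_zero_mat)

lemma rational_Ga_module_sqzero_coaction:
  fixes E :: "nat \<Rightarrow> 'a::field mat"
  assumes dim: "family_dim n E"
    and finite_support: "\<exists>d. \<forall>i>d. E i = 0\<^sub>m n n"
    and choose_vanishes:
      "\<And>j l. 0 < j \<Longrightarrow> 0 < l \<Longrightarrow> E (j + l) \<noteq> 0\<^sub>m n n \<Longrightarrow> of_nat ((j + l) choose j) = (0::'a)"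
  shows "rational_Ga_module (n + n) (sqzero_coaction n E)"
proof -
  let ?C = "sqzero_coaction n E"
  have carrier: "?C i \<in> carrier_mat (n + n) (n + n)" for i
    using dim by (simp add: family_dim_def sqzero_coaction_carrier)
  have "?C j * ?C l = of_nat ((j + l) choose j) \<cdot>\<^sub>m ?C (j + l)" for j l
  proof (cases "j = 0 \<or> l = 0")
    case True
    then show ?thesis
      using carrier[of j] carrier[of l]
      by (auto simp: sqzero_coaction_def)
  next
    case False
    have "of_nat ((j + l) choose j) \<cdot>\<^sub>m ?C (j + l) = 0\<^sub>m (n + n) (n + n)"
      using choose_vanishes[of j l] False carrier[of "j + l"]
      by (cases "E (j + l) = 0\<^sub>m n n")
        (auto simp: sqzero_coaction_def simp flip: four_block_zero_mat)
    then show ?thesis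
      using False dim sqzero_coaction_mult[of j l E n] by (simp add: family_dim_def)
  qed
  moreover have "\<exists>d. \<forall>i>d. ?C i = 0\<^sub>m (n + n) (n + n)"
  proof -
    obtain d where "\<forall>i>d. E i = 0\<^sub>m n n"
      using finite_support by blast
    then show ?thesis
      by (intro exI[of _ d]) (auto simp: sqzero_coaction_def simp flip: four_block_zero_mat)
  qed
  ultimately show ?thesis
    using carrier by (simp add: rational_Ga_module_def family_dim_def sqzero_coaction_def)
qed

lemma family_hom_sqzero_coactionD:
  assumes dims: "family_dim n E" "family_dim n' E'"
    and zero: "E 0 = 0\<^sub>m n n" "E' 0 = 0\<^sub>m n' n'"
    and one: "E 1 = 1\<^sub>m n" "E' 1 = 1\<^sub>m n'"
    and hom: "family_hom (n + n) (sqzero_coaction n E) (n' + n') (sqzero_coaction n' E') f"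
  obtains f1 f3 where "f = four_block_mat f1 (0\<^sub>m n' n) f3 f1"
    and "f3 \<in> carrier_mat n' n" and "family_hom n E n' E' f1"
proof -
  obtain f1 f2 f3 f4 where split: "split_block f n' n = (f1, f2, f3, f4)"
    by (metis prod_cases4)
  have f: "f = four_block_mat f1 f2 f3 f4"
    and c: "f1 \<in> carrier_mat n' n" "f2 \<in> carrier_mat n' n" "f3 \<in> carrier_mat n' n" "f4 \<in> carrier_mat n' n"
    using split_block[OF split, of n' n] hom by (auto simp: family_hom_def)
  have commute: "f2 * E i = 0\<^sub>m n' n \<and> f4 * E i = E' i * f1 \<and> E' i * f2 = 0\<^sub>m n' n" if "0 < i" for i
  proof -
    have X: "E i \<in> carrier_mat n n" and Y: "E' i \<in> carrier_mat n' n'"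
      using dims by (auto simp: family_dim_def)
    have "f * sqzero_coaction n E i = sqzero_coaction n' E' i * f"
      using hom by (simp add: family_hom_def)
    then have "four_block_mat (f2 * E i) (0\<^sub>m n' n) (f4 * E i) (0\<^sub>m n' n)
        = four_block_mat (0\<^sub>m n' n) (0\<^sub>m n' n) (E' i * f1) (E' i * f2)"
      using that c X Y
      by (simp add: f sqzero_coaction_def mult_four_block_mat[of _ n' n _ n _ n' _ _ n _ n]
          mult_four_block_mat[of _ n' n' _ n' _ n' _ _ n _ n])
    then show ?thesis
      using c X Y by (subst (asm) four_block_mat_eq_iff) auto
  qed
  have "f2 = 0\<^sub>m n' n" and "f4 = f1"
    using commute[of 1] one right_mult_one_mat[OF c(2)] right_mult_one_mat[OF c(4)]
      left_mult_one_mat[OF c(1)] by auto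
  moreover have "family_hom n E n' E' f1"
    unfolding family_hom_def
  proof (intro conjI allI)
    show "f1 \<in> carrier_mat n' n"
      by (fact c(1))
    show "f1 * E i = E' i * f1" for i
      using commute[of i] zero c(1) \<open>f4 = f1\<close> by (cases "i = 0") auto
  qed
  ultimately show thesis
    using that f c by blast
qed

lemma family_indec_sqzero_coaction:
  assumes indec: "family_indec n E" and dim: "family_dim n E"
    and zero: "E 0 = 0\<^sub>m n n" and one: "E 1 = 1\<^sub>m n"
  shows "family_indec (n + n) (sqzero_coaction n E)"
  unfolding family_indec_def
proof (intro conjI allI impI)
  show "0 < n + n"
    using indec by (simp add: family_indec_def)
  fix e
  assume "family_hom (n + n) (sqzero_coaction n E) (n + n) (sqzero_coaction n E) e \<and> e * e = e"
  then have hom: "family_hom (n + n) (sqzero_coaction n E) (n + n) (sqzero_coaction n E) e"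
    and idem: "e * e = e"
    by simp_all
  obtain e1 e3 where e: "e = four_block_mat e1 (0\<^sub>m n n) e3 e1"
    and e3: "e3 \<in> carrier_mat n n" and hom1: "family_hom n E n E e1"
    using family_hom_sqzero_coactionD[OF dim dim zero zero one one hom] .
  have e1: "e1 \<in> carrier_mat n n"
    using hom1 by (simp add: family_hom_def)
  have "four_block_mat (e1 * e1) (0\<^sub>m n n) (e3 * e1 + e1 * e3) (e1 * e1)
      = four_block_mat e1 (0\<^sub>m n n) e3 e1"
    using idem by (simp add: e mult_lower_block_mat[OF e1 e3 e1 e3])
  then have "e1 * e1 = e1 \<and> e3 * e1 + e1 * e3 = e3"
    by (subst (asm) four_block_mat_eq_iff) (use e1 e3 in auto)
  then have "e1 * e1 = e1" and e3_eq: "e3 * e1 + e1 * e3 = e3"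
    by simp_all
  then have "e1 = 0\<^sub>m n n \<or> e1 = 1\<^sub>m n"
    using indec hom1 by (simp add: family_indec_def)
  then show "e = 0\<^sub>m (n + n) (n + n) \<or> e = 1\<^sub>m (n + n)"
  proof
    assume "e1 = 0\<^sub>m n n"
    then show ?thesis
      using e e3_eq e3 by (simp flip: four_block_zero_mat)
  next
    assume "e1 = 1\<^sub>m n"
    then have "e3 = 0\<^sub>m n n"
      using e3_eq e3 by (intro mat_add_self_eq_self) simp_all
    then show ?thesis
      using e \<open>e1 = 1\<^sub>m n\<close> by simp
  qed
qed

lemma family_iso_sqzero_coactionD:
  assumes dims: "family_dim n E" "family_dim n' E'"
    and zero: "E 0 = 0\<^sub>m n n" "E' 0 = 0\<^sub>m n' n'"
    and one: "E 1 = 1\<^sub>m n" "E' 1 = 1\<^sub>m n'"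
    and iso: "family_iso (n + n) (sqzero_coaction n E) (n' + n') (sqzero_coaction n' E')"
  shows "family_iso n E n' E'"
proof -
  obtain f g
    where f: "family_hom (n + n) (sqzero_coaction n E) (n' + n') (sqzero_coaction n' E') f"
      and g: "family_hom (n' + n') (sqzero_coaction n' E') (n + n) (sqzero_coaction n E) g"
      and gf: "g * f = 1\<^sub>m (n + n)" and fg: "f * g = 1\<^sub>m (n' + n')"
    using iso by (auto simp: family_iso_def)
  obtain f1 f3 where f_eq: "f = four_block_mat f1 (0\<^sub>m n' n) f3 f1"
    and f3: "f3 \<in> carrier_mat n' n" and f1: "family_hom n E n' E' f1"
    using family_hom_sqzero_coactionD[OF dims zero one f] .
  obtain g1 g3 where g_eq: "g = four_block_mat g1 (0\<^sub>m n n') g3 g1"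
    and g3: "g3 \<in> carrier_mat n n'" and g1: "family_hom n' E' n E g1"
    using family_hom_sqzero_coactionD[OF dims(2,1) zero(2,1) one(2,1) g] .
  have c: "f1 \<in> carrier_mat n' n" "g1 \<in> carrier_mat n n'"
    using f1 g1 by (auto simp: family_hom_def)
  have "g1 * f1 = 1\<^sub>m n"
    using gf c f3 g3
    by (simp add: f_eq g_eq mult_lower_block_mat lower_block_mat_eq_one_iff)
  moreover have "f1 * g1 = 1\<^sub>m n'"
    using fg c f3 g3
    by (simp add: f_eq g_eq mult_lower_block_mat lower_block_mat_eq_one_iff)
  ultimately show ?thesis
    using f1 g1 by (auto simp: family_iso_def)
qed

subsection \<open>The embedding of pairs of matrices\<close>

definition pair_coaction :: "nat \<Rightarrow> nat \<Rightarrow> 'a::field mat \<Rightarrow> 'a mat \<Rightarrow> nat \<Rightarrow> 'a mat" where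
  "pair_coaction p n A B i =
    (if i = 1 then 1\<^sub>m n else if i = p then A else if i = p ^ 2 then B else 0\<^sub>m n n)"

lemma pair_coaction_family_dim:
  "A \<in> carrier_mat n n \<Longrightarrow> B \<in> carrier_mat n n \<Longrightarrow> family_dim n (pair_coaction p n A B)"
  by (simp add: family_dim_def pair_coaction_def)

lemma pair_coaction_at_p:
  assumes "2 \<le> p"
  shows "pair_coaction p n A B p = A" "pair_coaction p n A B (p ^ 2) = B"
proof -
  have "p < p ^ 2"
    using assms by (simp add: power2_eq_square)
  then show "pair_coaction p n A B p = A" "pair_coaction p n A B (p ^ 2) = B"
    using assms by (auto simp: pair_coaction_def)
qed

lemma family_hom_pair_coaction_iff:
  assumes "2 \<le> p"
  shows "family_hom n (pair_coaction p n A B) n' (pair_coaction p n' A' B') f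
    \<longleftrightarrow> family_hom n (pair_family A B) n' (pair_family A' B') f"
proof
  assume "family_hom n (pair_coaction p n A B) n' (pair_coaction p n' A' B') f"
  then show "family_hom n (pair_family A B) n' (pair_family A' B') f"
    unfolding family_hom_def pair_family_def
    by (metis (full_types) pair_coaction_at_p[OF assms(1)])
next
  assume "family_hom n (pair_family A B) n' (pair_family A' B') f"
  then have "f \<in> carrier_mat n' n" "f * A = A' * f" "f * B = B' * f"
    unfolding family_hom_def pair_family_def by (metis (full_types))+
  then show "family_hom n (pair_coaction p n A B) n' (pair_coaction p n' A' B') f"
    by (simp add: family_hom_def pair_coaction_def)
qed

lemma family_indec_pair_coaction_iff:
  "2 \<le> p \<Longrightarrow> family_indec n (pair_coaction p n A B) \<longleftrightarrow> family_indec n (pair_family A B)"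
  by (simp add: family_indec_def family_hom_pair_coaction_iff)

lemma family_iso_pair_coaction_iff:
  "2 \<le> p \<Longrightarrow> family_iso n (pair_coaction p n A B) n' (pair_coaction p n' A' B')
    \<longleftrightarrow> family_iso n (pair_family A B) n' (pair_family A' B')"
  by (simp add: family_iso_def family_hom_pair_coaction_iff)

lemma family_indec_sqzero_pair_coaction:
  assumes p: "2 \<le> p" and AB: "A \<in> carrier_mat n n" "B \<in> carrier_mat n n"
    and "family_indec n (pair_family A B)"
  shows "family_indec (n + n) (sqzero_coaction n (pair_coaction p n A B))"
proof (rule family_indec_sqzero_coaction)
  show "family_indec n (pair_coaction p n A B)"
    using assms by (simp add: family_indec_pair_coaction_iff)
qed (use p in \<open>simp_all add: pair_coaction_family_dim[OF AB] pair_coaction_def\<close>)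

lemma family_iso_sqzero_pair_coactionD:
  assumes p: "2 \<le> p"
    and AB: "A \<in> carrier_mat n n" "B \<in> carrier_mat n n" "A' \<in> carrier_mat n' n'" "B' \<in> carrier_mat n' n'"
    and "family_iso (n + n) (sqzero_coaction n (pair_coaction p n A B))
      (n' + n') (sqzero_coaction n' (pair_coaction p n' A' B'))"
  shows "family_iso n (pair_family A B) n' (pair_family A' B')"
proof -
  have "family_iso n (pair_coaction p n A B) n' (pair_coaction p n' A' B')"
    by (rule family_iso_sqzero_coactionD)
      (use assms in \<open>simp_all add: pair_coaction_family_dim pair_coaction_def\<close>)
  then show ?thesis
    using assms by (simp add: family_iso_pair_coaction_iff)
qed

lemma rational_Ga_module_pair_coaction:
  fixes A B :: "'a::field mat"
  assumes "prime CHAR('a)" and "A \<in> carrier_mat n n" "B \<in> carrier_mat n n"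
  shows "rational_Ga_module (n + n) (sqzero_coaction n (pair_coaction CHAR('a) n A B))"
proof (rule rational_Ga_module_sqzero_coaction)
  let ?p = "CHAR('a)"
  show "family_dim n (pair_coaction ?p n A B)"
    using assms(2,3) by (rule pair_coaction_family_dim)
  have "?p < ?p ^ 2"
    using prime_ge_2_nat[OF assms(1)] by (simp add: power2_eq_square)
  then show "\<exists>d. \<forall>i>d. pair_coaction ?p n A B i = 0\<^sub>m n n"
    by (intro exI[of _ "?p ^ 2"]) (auto simp: pair_coaction_def)
  fix j l :: nat
  assume "0 < j" "0 < l" "pair_coaction ?p n A B (j + l) \<noteq> 0\<^sub>m n n"
  then have "j + l = ?p ^ 1 \<or> j + l = ?p ^ 2"
    by (auto simp: pair_coaction_def split: if_splits)
  then obtain k where "j + l = ?p ^ k"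
    by blast
  moreover have "j < j + l"
    using \<open>0 < l\<close> by simp
  ultimately show "of_nat ((j + l) choose j) = (0::'a)"
    using of_nat_choose_CHAR_power_eq_0[OF assms(1) \<open>0 < j\<close>] by simp
qed

subsection \<open>Realisation by a bimodule over the free algebra\<close>

definition ncpoly_monom :: "bool list \<Rightarrow> bool list \<Rightarrow> 'a::field" where
  "ncpoly_monom w v = (if v = w then 1 else 0)"

lemma word_eval_carrier:
  "A \<in> carrier_mat n n \<Longrightarrow> B \<in> carrier_mat n n \<Longrightarrow> word_eval n A B w \<in> carrier_mat n n"
  by (induction w) auto

lemma ncpoly_eval_zero: "ncpoly_eval n (\<lambda>_. 0) A B = 0\<^sub>m n n"
  by (auto simp: ncpoly_eval_def)

lemma ncpoly_eval_monom:
  assumes "A \<in> carrier_mat n n" "B \<in> carrier_mat n n"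
  shows "ncpoly_eval n (ncpoly_monom w) A B = word_eval n A B w"
proof -
  have "{v. ncpoly_monom w v \<noteq> (0::'a)} = {w}"
    by (auto simp: ncpoly_monom_def)
  then have "ncpoly_eval n (ncpoly_monom w) A B = mat n n (\<lambda>ij. word_eval n A B w $$ ij)"
    by (simp add: ncpoly_eval_def ncpoly_monom_def case_prod_beta')
  also have "\<dots> = word_eval n A B w"
    using word_eval_carrier[OF assms, of w] by (intro eq_matI) auto
  finally show ?thesis .
qed

definition pair_poly :: "nat \<Rightarrow> nat \<Rightarrow> bool list \<Rightarrow> 'a::field" where
  "pair_poly p i =
    (if i = 1 then ncpoly_monom [] else if i = p then ncpoly_monom [False]
     else if i = p ^ 2 then ncpoly_monom [True] else (\<lambda>_. 0))"

definition sqzero_poly :: "nat \<Rightarrow> nat \<Rightarrow> nat \<Rightarrow> nat \<Rightarrow> bool list \<Rightarrow> 'a::field" where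
  "sqzero_poly p i a b =
    (if i = 0 \<and> a = b then ncpoly_monom [] else if 0 < i \<and> a = 1 \<and> b = 0 then pair_poly p i
     else (\<lambda>_. 0))"

lemma ncpoly_sqzero_poly: "ncpoly (sqzero_poly p i a b)"
proof -
  have "{w. sqzero_poly p i a b w \<noteq> (0::'a)} \<subseteq> {[], [False], [True]}"
    by (auto simp: sqzero_poly_def pair_poly_def ncpoly_monom_def)
  then show ?thesis
    unfolding ncpoly_def by (rule finite_subset) simp
qed

lemma sqzero_poly_eq_0: "p ^ 2 < i \<Longrightarrow> 0 < p \<Longrightarrow> sqzero_poly p i a b = (\<lambda>_. 0)"
  by (auto simp: sqzero_poly_def pair_poly_def power2_eq_square)

lemma ncpoly_eval_pair_poly:
  assumes "A \<in> carrier_mat n n" "B \<in> carrier_mat n n"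
  shows "ncpoly_eval n (pair_poly p i) A B = pair_coaction p n A B i"
  using assms
  by (simp add: pair_poly_def pair_coaction_def ncpoly_eval_monom ncpoly_eval_zero)

lemma bimod_functor_two:
  "bimod_functor 2 P n A B i = four_block_mat
    (ncpoly_eval n (P i 0 0) A B) (ncpoly_eval n (P i 0 1) A B)
    (ncpoly_eval n (P i 1 0) A B) (ncpoly_eval n (P i 1 1) A B)" (is "?F = ?M")
proof (rule eq_matI)
  fix r c
  assume "r < dim_row ?M" "c < dim_col ?M"
  then have "r < n + n" "c < n + n"
    by (simp_all add: ncpoly_eval_def)
  then show "?F $$ (r, c) = ?M $$ (r, c)"
    by (auto simp: bimod_functor_def ncpoly_eval_def le_div_geq le_mod_geq)
qed (simp_all add: bimod_functor_def ncpoly_eval_def)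

lemma ncpoly_eval_sqzero_poly:
  assumes "A \<in> carrier_mat n n" "B \<in> carrier_mat n n"
  shows "ncpoly_eval n (sqzero_poly p i a b) A B =
    (if i = 0 \<and> a = b then 1\<^sub>m n else if 0 < i \<and> a = 1 \<and> b = 0 then pair_coaction p n A B i
     else 0\<^sub>m n n)"
  using assms
  by (simp add: sqzero_poly_def ncpoly_eval_monom ncpoly_eval_zero ncpoly_eval_pair_poly)

lemma bimod_functor_sqzero_poly:
  assumes "A \<in> carrier_mat n n" "B \<in> carrier_mat n n"
  shows "bimod_functor 2 (sqzero_poly p) n A B = sqzero_coaction n (pair_coaction p n A B)"
  using assms
  by (auto simp: bimod_functor_two ncpoly_eval_sqzero_poly sqzero_coaction_def)

theorem corollary3p3:
  assumes "alg_closed TYPE('a::field)"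
    and "CHAR('a) > 0"
  shows "Ga_modules_wild TYPE('a)"
proof -
  let ?p = "CHAR('a)"
  have "prime ?p"
    using prime_CHAR_semidom[OF assms(2)] .
  then have "2 \<le> ?p"
    by (rule prime_ge_2_nat)
  note realisation = bimod_functor_sqzero_poly[where p = ?p]
  show ?thesis
    unfolding Ga_modules_wild_def
  proof (rule exI[of _ 2], rule exI[of _ "sqzero_poly ?p"], intro conjI allI impI)
    show "\<exists>d. \<forall>i>d. \<forall>a b. sqzero_poly ?p i a b = (\<lambda>_. 0 :: 'a)"
      using sqzero_poly_eq_0 assms(2) by (intro exI[of _ "?p ^ 2"]) blast
    fix n and A B :: "'a mat"
    assume AB: "A \<in> carrier_mat n n \<and> B \<in> carrier_mat n n"
    then show "rational_Ga_module (2 * n) (bimod_functor 2 (sqzero_poly ?p) n A B)"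
      by (simp add: mult_2 realisation rational_Ga_module_pair_coaction[OF \<open>prime ?p\<close>])
    assume "family_indec n (pair_family A B)"
    then show "family_indec (2 * n) (bimod_functor 2 (sqzero_poly ?p) n A B)"
      using AB \<open>2 \<le> ?p\<close> by (simp add: mult_2 realisation family_indec_sqzero_pair_coaction)
  next
    fix n n' and A B A' B' :: "'a mat"
    assume "A \<in> carrier_mat n n \<and> B \<in> carrier_mat n n \<and> A' \<in> carrier_mat n' n' \<and> B' \<in> carrier_mat n' n'"
      and "family_iso (2 * n) (bimod_functor 2 (sqzero_poly ?p) n A B)
        (2 * n') (bimod_functor 2 (sqzero_poly ?p) n' A' B')"
    then show "family_iso n (pair_family A B) n' (pair_family A' B')"
      using \<open>2 \<le> ?p\<close> family_iso_sqzero_pair_coactionD[of ?p A n B A' n' B']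
      by (simp add: mult_2 realisation)
  qed (simp_all add: ncpoly_sqzero_poly)
qed

end
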